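(* Consider online gradient descent $A$ on a finite-dimensional space with learning rates $\eta_t$ such that $\sum_{t=1}^T\eta_t=O(\rho_1(T))$. If $R_0(A)=O(\rho_2(T))$, then $R'_0(A)=O(\rho_1(T)+\rho_2(T))$.
   Context: The decision space $F\subseteq(\mathbb{R}^+)^n$ is non-empty, convex, bounded and closed; $\|\cdot\|$ is a seminorm on $\mathbb{R}^n$; cost functions $c^t:F\to\mathbb{R}^+$ are convex with (sub)gradients whose Euclidean norms $\|\nabla c^t(\cdot)\|_2$ are uniformly bounded over the sequence. Online gradient descent (OGD) with learning rates $\eta_t$: select an arbitrary $x^1\in F$, and at each step $t\ge1$ set $x^{t+1}=P(x^t-\eta_t\nabla c^t(x^t))$, where $P(y)=\arg\min_{x\in F}\|x-y\|_2$ is the Euclidean projection onto $F$; here $x^t$ is chosen before $c^t$ is revealed. With $x^0=0$, $C_0^\alpha(A)=\sum_{t=1}^T c^t(x^t)+\alpha\|x^t-x^{t-1}\|$ and $OPT_s=\min_{x\in F}\sum_{t=1}^Tc^t(x)$. The regret $R_0(A)$ is (at most) $\rho(T)$ if $C_0^0(A)-OPT_s\le\rho(T)$ for every admissible cost sequence, and $R'_0(A)$ is defined the same way with $C_0^1(A)$ in place of $C_0^0(A)$. *)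

theory Defs
  imports "HOL-Analysis.Analysis" "HOL-Library.Landau_Symbols"
begin

definition seminorm :: "('a::real_vector \<Rightarrow> real) \<Rightarrow> bool" where
  "seminorm N \<longleftrightarrow> (\<forall>x. 0 \<le> N x) \<and> (\<forall>x y. N (x + y) \<le> N x + N y)
      \<and> (\<forall>c x. N (c *\<^sub>R x) = \<bar>c\<bar> * N x)"

definition decision_space :: "(real ^ 'n) set \<Rightarrow> bool" where
  "decision_space F \<longleftrightarrow> F \<noteq> {} \<and> convex F \<and> bounded F \<and> closed F
      \<and> (\<forall>x\<in>F. \<forall>i. 0 \<le> x $ i)"

definition admissible ::
  "(real ^ 'n) set \<Rightarrow> real \<Rightarrow> (nat \<Rightarrow> real ^ 'n \<Rightarrow> real) \<Rightarrow> (nat \<Rightarrow> real ^ 'n \<Rightarrow> real ^ 'n) \<Rightarrow> bool"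
  where
  "admissible F G c g \<longleftrightarrow> (\<forall>t. convex_on F (c t) \<and> (\<forall>x\<in>F. 0 \<le> c t x)
      \<and> (\<forall>x\<in>F. \<forall>y\<in>F. c t x + g t x \<bullet> (y - x) \<le> c t y)
      \<and> (\<forall>x\<in>F. norm (g t x) \<le> G))"

fun ogd :: "(real ^ 'n) set \<Rightarrow> (nat \<Rightarrow> real) \<Rightarrow> (nat \<Rightarrow> real ^ 'n \<Rightarrow> real ^ 'n)
            \<Rightarrow> real ^ 'n \<Rightarrow> nat \<Rightarrow> real ^ 'n" where
  "ogd F eta g x1 0 = 0"
| "ogd F eta g x1 (Suc 0) = x1"
| "ogd F eta g x1 (Suc (Suc t)) =
     closest_point F (ogd F eta g x1 (Suc t) - eta (Suc t) *\<^sub>R g (Suc t) (ogd F eta g x1 (Suc t)))"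

definition cost :: "(real ^ 'n \<Rightarrow> real) \<Rightarrow> real \<Rightarrow> (nat \<Rightarrow> real ^ 'n \<Rightarrow> real)
                    \<Rightarrow> (nat \<Rightarrow> real ^ 'n) \<Rightarrow> nat \<Rightarrow> real" where
  "cost N \<alpha> c x T = (\<Sum>t=1..T. c t (x t) + \<alpha> * N (x t - x (t - 1)))"

definition OPT_s :: "(real ^ 'n) set \<Rightarrow> (nat \<Rightarrow> real ^ 'n \<Rightarrow> real) \<Rightarrow> nat \<Rightarrow> real" where
  "OPT_s F c T = (INF y\<in>F. \<Sum>t=1..T. c t y)"

end

theory Submission imports Defs begin

text \<open>The switching cost of OGD is controlled by the step sizes: projection onto a convex set is
  1-Lipschitz, so the step from \<open>x\<^sup>t\<close> to \<open>x\<^sup>t\<^sup>+\<^sup>1\<close> has Euclidean length at most \<open>\<eta>\<^sub>t G\<close>, and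
  on a finite-dimensional space every seminorm satisfies \<open>N v \<le> D \<parallel>v\<parallel>\<close> with \<open>D = \<Sum>\<^sub>b N b\<close>
  over a basis. Hence the total switching cost is at most \<open>N x\<^sup>1 + D G \<Sum>\<^sub>t \<eta>\<^sub>t = O(\<rho>\<^sub>1)\<close>;
  the constant \<open>N x\<^sup>1\<close> is absorbed because \<open>\<rho>\<^sub>1 + \<rho>\<^sub>2\<close> is eventually bounded away from 0.\<close>

lemma seminorm_nonneg: "seminorm N \<Longrightarrow> 0 \<le> N x"
  by (simp add: seminorm_def)

lemma seminorm_scaleR: "seminorm N \<Longrightarrow> N (c *\<^sub>R x) = \<bar>c\<bar> * N x"
  by (simp add: seminorm_def)

lemma seminorm_zero: "seminorm N \<Longrightarrow> N 0 = 0"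
  using seminorm_scaleR[of N 0 0] by simp

lemma seminorm_sum_le:
  assumes "seminorm N"
  shows "N (sum f A) \<le> (\<Sum>a\<in>A. N (f a))"
proof (induction A rule: infinite_finite_induct)
  case (insert a A)
  have "N (f a + sum f A) \<le> N (f a) + N (sum f A)"
    using assms by (simp add: seminorm_def)
  with insert show ?case by simp
qed (simp_all add: seminorm_zero[OF assms])

lemma seminorm_le_norm:
  fixes N :: "'a::euclidean_space \<Rightarrow> real"
  assumes "seminorm N"
  shows "N v \<le> (\<Sum>b\<in>Basis. N b) * norm v"
proof -
  have "N v = N (\<Sum>b\<in>Basis. (v \<bullet> b) *\<^sub>R b)"
    by (simp add: euclidean_representation)
  also have "\<dots> \<le> (\<Sum>b\<in>Basis. N ((v \<bullet> b) *\<^sub>R b))"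
    by (rule seminorm_sum_le[OF assms])
  also have "\<dots> = (\<Sum>b\<in>Basis. \<bar>v \<bullet> b\<bar> * N b)"
    by (simp add: seminorm_scaleR[OF assms])
  also have "\<dots> \<le> (\<Sum>b\<in>Basis. norm v * N b)"
    by (intro sum_mono mult_right_mono Basis_le_norm seminorm_nonneg[OF assms]) auto
  finally show ?thesis
    by (simp add: sum_distrib_left mult.commute)
qed

lemma admissible_bound_nonneg:
  assumes "admissible F G c g" and "F \<noteq> {}"
  shows "0 \<le> G"
  using assms unfolding admissible_def by (meson all_not_in_conv norm_ge_zero order_trans)

lemma seminorm_basis_sum_mult_bound_nonneg:
  assumes "seminorm N" and "admissible F G c g" and "decision_space F"
  shows "0 \<le> (\<Sum>b\<in>Basis. N b) * G"
  using admissible_bound_nonneg[OF assms(2)] assms(3)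
  by (simp add: decision_space_def seminorm_nonneg[OF assms(1)] sum_nonneg)

lemma ogd_in_decision_space:
  assumes "decision_space F" and "x1 \<in> F"
  shows "ogd F eta g x1 (Suc t) \<in> F"
  using assms by (cases t) (auto simp: decision_space_def intro: closest_point_in_set)

lemma ogd_step_norm_le:
  assumes "decision_space F" and "x1 \<in> F" and "admissible F G c g" and "0 \<le> eta (Suc t)"
  shows "norm (ogd F eta g x1 (Suc (Suc t)) - ogd F eta g x1 (Suc t)) \<le> eta (Suc t) * G"
proof -
  let ?x = "ogd F eta g x1 (Suc t)"
  have x: "?x \<in> F"
    using ogd_in_decision_space[OF assms(1,2)] .
  have F: "convex F" "closed F" "F \<noteq> {}"
    using assms(1) by (auto simp: decision_space_def)
  have "norm (ogd F eta g x1 (Suc (Suc t)) - ?x)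
      = dist (closest_point F (?x - eta (Suc t) *\<^sub>R g (Suc t) ?x)) (closest_point F ?x)"
    by (simp add: dist_norm closest_point_self[OF x])
  also have "\<dots> \<le> dist (?x - eta (Suc t) *\<^sub>R g (Suc t) ?x) ?x"
    by (rule closest_point_lipschitz[OF F])
  also have "\<dots> = eta (Suc t) * norm (g (Suc t) ?x)"
    using assms(4) by (simp add: dist_norm)
  also have "\<dots> \<le> eta (Suc t) * G"
    using assms(3,4) x unfolding admissible_def by (simp add: mult_left_mono)
  finally show ?thesis .
qed

lemma ogd_switching_cost_le:
  fixes N :: "real ^ 'n \<Rightarrow> real"
  assumes "decision_space F" and "x1 \<in> F" and "admissible F G c g"
    and "\<And>t. 0 \<le> eta t" and "seminorm N"
  shows "(\<Sum>t=1..T. N (ogd F eta g x1 t - ogd F eta g x1 (t - 1)))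
           \<le> N x1 + (\<Sum>b\<in>Basis. N b) * G * (\<Sum>t\<in>{1..<T}. eta t)"
proof (induction T)
  case 0
  then show ?case
    using seminorm_nonneg[OF assms(5)] by simp
next
  case (Suc T)
  show ?case
  proof (cases T)
    case 0
    then show ?thesis by simp
  next
    case (Suc s)
    let ?D = "\<Sum>b\<in>Basis. N b"
    have "N (ogd F eta g x1 (Suc T) - ogd F eta g x1 T)
        \<le> ?D * norm (ogd F eta g x1 (Suc T) - ogd F eta g x1 T)"
      by (rule seminorm_le_norm[OF assms(5)])
    also have "\<dots> \<le> ?D * (eta T * G)"
      using ogd_step_norm_le[of F x1 G c g eta s] assms(1-4) Suc
      by (simp add: mult_left_mono sum_nonneg seminorm_nonneg[OF assms(5)])
    finally show ?thesis
      using Suc.IH \<open>T = Suc s\<close> by (simp add: algebra_simps)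
  qed
qed

lemma cost_eq_switching:
  "cost N \<alpha> c x T = cost N 0 c x T + \<alpha> * (\<Sum>t=1..T. N (x t - x (t - 1)))"
  unfolding cost_def by (simp add: sum.distrib sum_distrib_left)

lemma ogd_cost_le_cost_without_switching:
  fixes N :: "real ^ 'n \<Rightarrow> real"
  assumes "decision_space F" and "x1 \<in> F" and "admissible F G c g"
    and "\<And>t. 0 \<le> eta t" and "seminorm N"
  shows "cost N 1 c (ogd F eta g x1) T
           \<le> cost N 0 c (ogd F eta g x1) T + N x1 + (\<Sum>b\<in>Basis. N b) * G * (\<Sum>t=1..T. eta t)"
proof -
  have DG: "0 \<le> (\<Sum>b\<in>Basis. N b) * G"
    using assms(5,3,1) by (rule seminorm_basis_sum_mult_bound_nonneg)
  have "(\<Sum>t=1..T. N (ogd F eta g x1 t - ogd F eta g x1 (t - 1)))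
      \<le> N x1 + (\<Sum>b\<in>Basis. N b) * G * (\<Sum>t\<in>{1..<T}. eta t)"
    using assms by (rule ogd_switching_cost_le)
  also have "\<dots> \<le> N x1 + (\<Sum>b\<in>Basis. N b) * G * (\<Sum>t=1..T. eta t)"
    using assms(4) by (intro add_left_mono mult_left_mono[OF _ DG] sum_mono2) auto
  finally show ?thesis
    by (simp add: cost_eq_switching[of N 1])
qed

lemma le_rate_sum_combination:
  fixes r a s d e b K C \<rho>1 \<rho>2 :: real
  assumes "r \<le> a + s + d * e" and "a \<le> K * \<rho>2" and "e \<le> C * \<rho>1" and "b \<le> \<rho>1 + \<rho>2"
    and "0 < b" and "0 \<le> s" and "0 \<le> d" and "0 \<le> C" and "0 \<le> \<rho>1" and "0 \<le> \<rho>2"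
  shows "r \<le> (max K 0 + d * C + s / b) * (\<rho>1 + \<rho>2)"
proof -
  have "a \<le> max K 0 * \<rho>2"
    using assms(2) mult_right_mono[OF max.cobounded1[of K 0] assms(10)] by linarith
  also have "\<dots> \<le> max K 0 * (\<rho>1 + \<rho>2)"
    using assms(9) by (intro mult_left_mono) auto
  finally have a: "a \<le> max K 0 * (\<rho>1 + \<rho>2)" .
  have "d * e \<le> d * (C * \<rho>1)"
    using assms(3,7) by (rule mult_left_mono)
  also have "\<dots> \<le> d * (C * (\<rho>1 + \<rho>2))"
    using assms(7,8,10) by (intro mult_left_mono) auto
  finally have de: "d * e \<le> d * C * (\<rho>1 + \<rho>2)"
    by (simp add: mult.assoc)
  have "s \<le> s / b * (\<rho>1 + \<rho>2)"
    using mult_left_mono[OF assms(4,6)] assms(5) by (simp add: field_simps)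
  with assms(1) a de show ?thesis
    by (simp add: algebra_simps)
qed

theorem proposition1:
  fixes F :: "(real ^ 'n) set" and N :: "real ^ 'n \<Rightarrow> real" and G :: real
    and eta :: "nat \<Rightarrow> real" and x1 :: "real ^ 'n" and \<rho>1 \<rho>2 :: "nat \<Rightarrow> real"
  assumes "decision_space F" and "seminorm N" and "x1 \<in> F"
    and "\<And>t. 0 < eta t"
    and "\<And>T. 0 \<le> \<rho>1 T" and "\<And>T. 0 \<le> \<rho>2 T"
    and "\<exists>b>0. \<forall>\<^sub>F T in sequentially. b \<le> \<rho>1 T + \<rho>2 T"
    and "(\<lambda>T. \<Sum>t=1..T. eta t) \<in> O(\<rho>1)"
    and "\<exists>K. \<forall>\<^sub>F T in sequentially. \<forall>c g. admissible F G c g \<longrightarrow>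
           cost N 0 c (ogd F eta g x1) T - OPT_s F c T \<le> K * \<rho>2 T"
  shows "\<exists>K. \<forall>\<^sub>F T in sequentially. \<forall>c g. admissible F G c g \<longrightarrow>
           cost N 1 c (ogd F eta g x1) T - OPT_s F c T \<le> K * (\<rho>1 T + \<rho>2 T)"
proof -
  have eta_nonneg: "\<And>t. 0 \<le> eta t"
    using assms(4) less_imp_le by blast
  obtain b where "0 < b" and ev_b: "\<forall>\<^sub>F T in sequentially. b \<le> \<rho>1 T + \<rho>2 T"
    using assms(7) by blast
  obtain C where "0 < C" and ev_C: "\<forall>\<^sub>F T in sequentially. norm (\<Sum>t=1..T. eta t) \<le> C * norm (\<rho>1 T)"
    using landau_o.bigE[OF assms(8)] by blast
  obtain K where ev_K: "\<forall>\<^sub>F T in sequentially. \<forall>c g. admissible F G c g \<longrightarrow>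
      cost N 0 c (ogd F eta g x1) T - OPT_s F c T \<le> K * \<rho>2 T"
    using assms(9) by blast
  have "\<forall>\<^sub>F T in sequentially. \<forall>c g. admissible F G c g \<longrightarrow>
      cost N 1 c (ogd F eta g x1) T - OPT_s F c T
        \<le> (max K 0 + (\<Sum>b\<in>Basis. N b) * G * C + N x1 / b) * (\<rho>1 T + \<rho>2 T)"
    using ev_b ev_C ev_K
  proof (eventually_elim, intro allI impI)
    fix T c g
    assume \<rho>_ge: "b \<le> \<rho>1 T + \<rho>2 T" and eta_le: "norm (\<Sum>t=1..T. eta t) \<le> C * norm (\<rho>1 T)"
      and regret: "\<forall>c g. admissible F G c g \<longrightarrow> cost N 0 c (ogd F eta g x1) T - OPT_s F c T \<le> K * \<rho>2 T"
      and adm: "admissible F G c g"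
    have "(\<Sum>t=1..T. eta t) \<le> C * \<rho>1 T"
      using eta_le assms(5)[of T] by simp
    moreover have "cost N 1 c (ogd F eta g x1) T \<le> cost N 0 c (ogd F eta g x1) T + N x1
        + (\<Sum>b\<in>Basis. N b) * G * (\<Sum>t=1..T. eta t)"
      using assms(1,3) adm eta_nonneg assms(2) by (rule ogd_cost_le_cost_without_switching)
    then have "cost N 1 c (ogd F eta g x1) T - OPT_s F c T
        \<le> (cost N 0 c (ogd F eta g x1) T - OPT_s F c T) + N x1
           + (\<Sum>b\<in>Basis. N b) * G * (\<Sum>t=1..T. eta t)"
      by simp
    ultimately show "cost N 1 c (ogd F eta g x1) T - OPT_s F c T
        \<le> (max K 0 + (\<Sum>b\<in>Basis. N b) * G * C + N x1 / b) * (\<rho>1 T + \<rho>2 T)"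
      using regret[rule_format, OF adm] \<rho>_ge \<open>0 < b\<close> \<open>0 < C\<close> assms(5,6)[of T]
        seminorm_nonneg[OF assms(2), of x1] seminorm_basis_sum_mult_bound_nonneg[OF assms(2) adm assms(1)]
      by (intro le_rate_sum_combination) simp_all
  qed
  then show ?thesis by blast
qed

end
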